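(* Assume Hypothesis (H), let $b=b_1+b_2$, $M=N-P$ be splittings as described, $J(x):=N-b_1(\cdot,x)$, $g(x):=a+Px+b_2(x,x)$, and let $(x_k)$ be generated by $x_{k+1}=J(x_k)^{-1}g(x_k)$ from some $x_0$ with $0\leq x_0\leq x_\ast$ and $F(x_0)\leq 0$. Fix $k\geq 0$, let $y_k$ be any vector with $x_k\leq y_k\leq x_{k+1}$ and $g_k$ any vector with $g(x_k)\leq g_k\leq g(x_{k+1})$. Then $J(y_k)$ is nonsingular and $x^{GS}_{k+1}:=J(y_k)^{-1}g_k$ satisfies $x_{k+1}\leq x^{GS}_{k+1}\leq x_\ast$.
   Context: Inequalities between vectors/matrices are componentwise. An M-matrix is a matrix $sI-P$ with $P\geq0$ entrywise and $s\geq\rho(P)$ ($\rho$ = spectral radius). Let $M\in\mathbb R^{n\times n}$ be a nonsingular M-matrix, $a\in\mathbb R^n$ with $a\geq 0$, and $b:\mathbb R^n\times\mathbb R^n\to\mathbb R^n$ a bilinear map (not necessarily symmetric) with $b(x,y)\geq 0$ whenever $x,y\geq 0$. A solution of $Mx=a+b(x,x)$ means a vector $x\geq 0$ satisfying it; a solution $x_\ast$ is minimal if $x_\ast\leq y$ for every solution $y$. $F(x):=Mx-a-b(x,x)$. For a bilinear map $c$ and $x\in\mathbb R^n$, $c(x,\cdot)$ and $c(\cdot,x)$ denote the $n\times n$ matrices of $y\mapsto c(x,y)$ and $y\mapsto c(y,x)$; $F'_x:=M-b(x,\cdot)-b(\cdot,x)$. Hypothesis (H): the equation has a minimal solution $x_\ast$,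 $x_\ast>0$ (all components strictly positive), and either $F'_{x_\ast}$ is nonsingular, or $F'_{x_\ast}$ is irreducible and $F'_x\neq F'_{x_\ast}$ for every $x$ with $0\leq x\leq x_\ast$, $x\neq x_\ast$. Splittings: $b=b_1+b_2$ with $b_1,b_2$ bilinear and $b_i(x,y)\geq0$ for $x,y\geq0$; $M=N-P$ with $N$ an M-matrix and $P\geq 0$. *)

theory Defs
  imports "HOL-Analysis.Analysis"
begin

definition cmat :: "real^'n^'n \<Rightarrow> complex^'n^'n" where
  "cmat A = (\<chi> i j. complex_of_real (A $ i $ j))"

definition spec_rad :: "real^'n^'n \<Rightarrow> real" where
  "spec_rad A = Max {cmod l | l. det (mat l - cmat A) = 0}"

definition M_matrix :: "real^'n^'n \<Rightarrow> bool" where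
  "M_matrix A \<longleftrightarrow> (\<exists>s P. 0 \<le> P \<and> spec_rad P \<le> s \<and> A = mat s - P)"

text \<open>Irreducible matrix: no simultaneous row/column permutation brings it into
  block upper triangular form, i.e. there is no nonempty proper index set I with
  A_ij = 0 for all i in I, j not in I.\<close>
definition irreducible_mat :: "real^'n^'n \<Rightarrow> bool" where
  "irreducible_mat A \<longleftrightarrow>
     \<not> (\<exists>I. I \<noteq> {} \<and> I \<noteq> UNIV \<and> (\<forall>i\<in>I. \<forall>j. j \<notin> I \<longrightarrow> A $ i $ j = 0))"

definition is_sol :: "real^'n^'n \<Rightarrow> real^'n \<Rightarrow> (real^'n \<Rightarrow> real^'n \<Rightarrow> real^'n) \<Rightarrow> real^'n \<Rightarrow> bool" where
  "is_sol M a b x \<longleftrightarrow> 0 \<le> x \<and> M *v x = a + b x x"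

definition is_min_sol :: "real^'n^'n \<Rightarrow> real^'n \<Rightarrow> (real^'n \<Rightarrow> real^'n \<Rightarrow> real^'n) \<Rightarrow> real^'n \<Rightarrow> bool" where
  "is_min_sol M a b x \<longleftrightarrow> is_sol M a b x \<and> (\<forall>y. is_sol M a b y \<longrightarrow> x \<le> y)"

definition Fmap :: "real^'n^'n \<Rightarrow> real^'n \<Rightarrow> (real^'n \<Rightarrow> real^'n \<Rightarrow> real^'n) \<Rightarrow> real^'n \<Rightarrow> real^'n" where
  "Fmap M a b x = M *v x - a - b x x"

definition Fderiv :: "real^'n^'n \<Rightarrow> (real^'n \<Rightarrow> real^'n \<Rightarrow> real^'n) \<Rightarrow> real^'n \<Rightarrow> real^'n^'n" where
  "Fderiv M b x = M - matrix (\<lambda>y. b x y) - matrix (\<lambda>y. b y x)"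

definition hypH :: "real^'n^'n \<Rightarrow> real^'n \<Rightarrow> (real^'n \<Rightarrow> real^'n \<Rightarrow> real^'n) \<Rightarrow> real^'n \<Rightarrow> bool" where
  "hypH M a b xs \<longleftrightarrow> is_min_sol M a b xs \<and> (\<forall>i. 0 < xs $ i) \<and>
     (invertible (Fderiv M b xs) \<or>
      (irreducible_mat (Fderiv M b xs) \<and>
       (\<forall>x. 0 \<le> x \<and> x \<le> xs \<and> x \<noteq> xs \<longrightarrow> Fderiv M b x \<noteq> Fderiv M b xs)))"

end

theory Submission
  imports Defs
begin

text \<open>
  The whole argument rests on inverse monotonicity (A z >= 0 implies z >= 0). A Z-matrix A
  is inverse monotone once A v >= 0 for some v > 0 and A v vanishes on no index block that
  A maps into itself.
  (1) Taking v = x*, the matrix M is inverse monotone: a closed block on which M x* vanishes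
      would make M singular.
  (2) Hence monotone iteration produces a solution below every supersolution; with the
      minimality of x* this shows that J(x*) is inverse monotone, since a closed block on
      which J(x*) x* vanishes would yield a supersolution that is not above x*.
  (3) For v = J(x*)^{-1} 1 and 0 <= y <= x* we get J(y) v >= 1, so every such J(y) is
      inverse monotone and in particular nonsingular.
  (4) The comparison identity J(y) v = J(y') v - b1(v, y - y') then gives, by induction,
      x_k <= x_{k+1} <= x* and F(x_k) <= 0, and finally the bounds for the modified step.
\<close>

definition Z_matrix :: "real^'n^'n \<Rightarrow> bool" where
  "Z_matrix A \<longleftrightarrow> (\<forall>i j. i \<noteq> j \<longrightarrow> A $ i $ j \<le> 0)"

definition inv_monotone :: "real^'n^'n \<Rightarrow> bool" where
  "inv_monotone A \<longleftrightarrow> (\<forall>z. 0 \<le> A *v z \<longrightarrow> 0 \<le> z)"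

definition closed_block :: "real^'n^'n \<Rightarrow> 'n set \<Rightarrow> bool" where
  "closed_block A I \<longleftrightarrow> (\<forall>i\<in>I. \<forall>j. j \<notin> I \<longrightarrow> A $ i $ j = 0)"

text \<open>Only the sign pattern of an M-matrix is used below.\<close>
lemma M_matrix_imp_Z_matrix: "M_matrix A \<Longrightarrow> Z_matrix A"
  by (auto simp: M_matrix_def Z_matrix_def mat_def less_eq_vec_def)

lemma matrix_vector_nonneg:
  fixes P :: "real^'n^'m"
  assumes "0 \<le> P" "0 \<le> v" shows "0 \<le> P *v v"
  using assms by (auto simp: less_eq_vec_def matrix_vector_mult_def intro!: sum_nonneg)

lemma matrix_vector_mono:
  fixes P :: "real^'n^'m"
  assumes "0 \<le> P" "u \<le> v" shows "P *v u \<le> P *v v"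
proof -
  have "0 \<le> P *v (v - u)"
    using assms by (intro matrix_vector_nonneg) (auto simp: less_eq_vec_def)
  then show ?thesis by (simp add: matrix_vector_mult_diff_distrib less_eq_vec_def)
qed

lemma nonneg_matrix_vanishing_row:
  fixes P :: "real^'n^'m"
  assumes "0 \<le> P" "\<And>j. 0 < v $ j" "(P *v v) $ i = 0" shows "P $ i $ j = 0"
proof -
  have terms: "0 \<le> P $ i $ k * v $ k" for k
    using assms(1) assms(2)[of k] by (simp add: less_eq_vec_def)
  have "(\<Sum>k\<in>UNIV. P $ i $ k * v $ k) = 0" using assms(3) by (simp add: matrix_vector_mult_def)
  then have "P $ i $ j * v $ j = 0"
    using sum_nonneg_eq_0_iff[of UNIV "\<lambda>k. P $ i $ k * v $ k"] terms by simp
  then show ?thesis using assms(2)[of j] by simp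
qed

lemma bilinear_matrix_apply:
  fixes h :: "real^'n \<Rightarrow> real^'n \<Rightarrow> real^'m"
  assumes "bilinear h" shows "matrix (\<lambda>y. h y z) *v x = h x z"
proof -
  have "linear (\<lambda>y. h y z)" using assms by (simp add: bilinear_def)
  then show ?thesis by (metis matrix_vector_mul(2))
qed

lemma matrix_entry_axis: "matrix f $ i $ j = f (axis j 1) $ i"
  by (simp add: matrix_def)

text \<open>A bilinear map that is nonnegative on the nonnegative cone is monotone there in both
  arguments: h u' v' - h u v = h (u' - u) v' + h u (v' - v).\<close>
lemma bilinear_nonneg_mono:
  fixes h :: "real^'n \<Rightarrow> real^'n \<Rightarrow> real^'m"
  assumes h: "bilinear h" "\<And>u v. 0 \<le> u \<Longrightarrow> 0 \<le> v \<Longrightarrow> 0 \<le> h u v"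
    and "0 \<le> u" "u \<le> u'" "0 \<le> v" "v \<le> v'"
  shows "h u v \<le> h u' v'"
proof -
  have "0 \<le> u' - u" "0 \<le> v' - v" "0 \<le> v'"
    using assms by (auto simp: less_eq_vec_def intro: order_trans)
  then have "0 \<le> h (u' - u) v' + h u (v' - v)"
    using h(2) \<open>0 \<le> u\<close> by (simp add: add_nonneg_nonneg)
  also have "\<dots> = h u' v' - h u v"
    using h(1) by (simp add: bilinear_lsub bilinear_rsub)
  finally show ?thesis by (simp add: less_eq_vec_def)
qed

lemma invertible_matrix_inv_apply:
  fixes A :: "real^'n^'n"
  assumes "invertible A" shows "A *v (matrix_inv A *v y) = y"
proof -
  have "A ** matrix_inv A = mat 1 \<and> matrix_inv A ** A = mat 1"
    unfolding matrix_inv_def by (rule someI_ex) (use assms in \<open>simp add: invertible_def\<close>)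
  then show ?thesis by (simp add: matrix_vector_mul_assoc)
qed

lemma inv_monotone_le:
  assumes "inv_monotone A" "A *v p \<le> A *v q" shows "p \<le> q"
proof -
  have "0 \<le> A *v (q - p)"
    using assms(2) by (simp add: matrix_vector_mult_diff_distrib less_eq_vec_def)
  then have "0 \<le> q - p" using assms(1) unfolding inv_monotone_def by blast
  then show ?thesis by (simp add: less_eq_vec_def)
qed

lemma inv_monotone_invertible:
  fixes A :: "real^'n^'n"
  assumes "inv_monotone A" shows "invertible A"
proof -
  have "inj ((*v) A)"
  proof (rule injI)
    fix x y assume "A *v x = A *v y"
    then have "x \<le> y" "y \<le> x" using inv_monotone_le[OF assms] by simp_all
    then show "x = y" by (rule order.antisym)
  qed
  then show ?thesis
    using matrix_left_invertible_injective invertible_left_inverse by blast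
qed

lemma closed_block_apply:
  assumes "closed_block A I" "i \<in> I" "\<And>j. j \<in> I \<Longrightarrow> w $ j = w' $ j"
  shows "(A *v w) $ i = (A *v w') $ i"
  using assms unfolding closed_block_def matrix_vector_mult_def
  by (auto intro!: sum.cong) (metis mult_zero_left)

lemma Z_matrix_offdiag_nonpos:
  assumes "Z_matrix A" "0 \<le> w" "w $ i = 0" shows "(A *v w) $ i \<le> 0"
  unfolding matrix_vector_mult_def vec_lambda_beta
proof (rule sum_nonpos)
  fix j show "A $ i $ j * w $ j \<le> 0"
    using assms by (cases "j = i") (auto simp: Z_matrix_def less_eq_vec_def mult_nonpos_nonneg)
qed

lemma Z_matrix_offdiag_zero:
  assumes Z: "Z_matrix A" and w: "0 \<le> w" "w $ i = 0" and Aw: "(A *v w) $ i = 0"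
  shows "A $ i $ j * w $ j = 0"
proof -
  have terms: "0 \<le> - (A $ i $ k * w $ k)" for k
    using Z w by (cases "k = i") (auto simp: Z_matrix_def less_eq_vec_def mult_nonpos_nonneg)
  have "(\<Sum>k\<in>UNIV. - (A $ i $ k * w $ k)) = 0"
    using Aw by (simp add: matrix_vector_mult_def sum_negf)
  then show ?thesis
    using sum_nonneg_eq_0_iff[of UNIV "\<lambda>k. - (A $ i $ k * w $ k)"] terms by simp
qed

text \<open>If A z \<ge> 0 but z has a negative
  component, take the minimal ratio m = min z_i / v_i < 0 and the set I where it is
  attained; then w = z - m v \<ge> 0 vanishes exactly on I, which forces A v to vanish on I
  and I to be closed for A.\<close>
lemma Z_matrix_inv_monotone:
  fixes A :: "real^'n^'n"
  assumes Z: "Z_matrix A" and v_pos: "\<And>i. 0 < v $ i" and Av: "0 \<le> A *v v"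
    and no_block: "\<And>I. I \<noteq> {} \<Longrightarrow> closed_block A I \<Longrightarrow> \<exists>i\<in>I. (A *v v) $ i \<noteq> 0"
  shows "inv_monotone A"
  unfolding inv_monotone_def
proof (intro allI impI, rule ccontr)
  fix z assume Az: "0 \<le> A *v z" and not_nonneg: "\<not> 0 \<le> z"
  define r where "r i = z $ i / v $ i" for i
  define m where "m = Min (range r)"
  define I where "I = {i. r i = m}"
  define w where "w = z - m *\<^sub>R v"
  have m_le: "m \<le> r j" for j unfolding m_def by simp
  have "m \<in> range r" unfolding m_def by (rule Min_in) auto
  then have I_ne: "I \<noteq> {}" by (auto simp: I_def)
  obtain i0 where "z $ i0 < 0" using not_nonneg by (auto simp: less_eq_vec_def not_le)
  then have "r i0 < 0" using v_pos[of i0] by (simp add: r_def divide_neg_pos)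
  then have m_neg: "m < 0" using m_le[of i0] by linarith
  have w_comp: "w $ j = v $ j * (r j - m)" for j
    using v_pos[of j] by (simp add: w_def r_def algebra_simps)
  have w_nonneg: "0 \<le> w"
    using m_le v_pos by (auto simp: less_eq_vec_def w_comp less_imp_le)
  have w_zero_iff: "w $ j = 0 \<longleftrightarrow> j \<in> I" for j
    using v_pos[of j] by (simp add: w_comp I_def)
  have Az_split: "A *v z = A *v w + m *\<^sub>R (A *v v)"
    by (simp add: w_def algebra_simps)
  have on_I: "(A *v v) $ i = 0 \<and> (A *v w) $ i = 0" if "i \<in> I" for i
  proof -
    have "(A *v w) $ i \<le> 0"
      using Z w_nonneg w_zero_iff that by (simp add: Z_matrix_offdiag_nonpos)
    moreover have "m * (A *v v) $ i \<le> 0"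
      using m_neg Av by (simp add: less_eq_vec_def mult_nonpos_nonneg)
    moreover have "0 \<le> (A *v w) $ i + m * (A *v v) $ i"
      using Az unfolding Az_split by (simp add: less_eq_vec_def)
    ultimately have "m * (A *v v) $ i = 0" "(A *v w) $ i = 0" by linarith+
    then show ?thesis using m_neg by simp
  qed
  have "closed_block A I"
    unfolding closed_block_def
  proof (intro ballI allI impI)
    fix i j assume "i \<in> I" "j \<notin> I"
    then have "A $ i $ j * w $ j = 0"
      using on_I w_nonneg w_zero_iff by (intro Z_matrix_offdiag_zero[OF Z]) auto
    then show "A $ i $ j = 0" using w_zero_iff \<open>j \<notin> I\<close> by simp
  qed
  then show False using no_block[OF I_ne] on_I by blast
qed

text \<open>A semipositive Z-matrix (A v > 0 for some v \<ge> 0) is inverse monotone; v is then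
  automatically positive.\<close>
lemma Z_matrix_semipositive_inv_monotone:
  fixes A :: "real^'n^'n"
  assumes Z: "Z_matrix A" and v: "0 \<le> v" and Av_pos: "\<And>i. 0 < (A *v v) $ i"
  shows "inv_monotone A"
proof (rule Z_matrix_inv_monotone[OF Z])
  show "0 < v $ i" for i
    using Z_matrix_offdiag_nonpos[OF Z v, of i] Av_pos[of i] v
    by (metis less_eq_vec_def not_le order.not_eq_order_implies_strict zero_index)
  show "0 \<le> A *v v" using Av_pos by (simp add: less_eq_vec_def less_imp_le)
  show "\<exists>i\<in>I. (A *v v) $ i \<noteq> 0" if "I \<noteq> {}" for I
    using that Av_pos by (metis all_not_in_conv less_irrefl)
qed

text \<open>A vector supported on a closed block I, nonzero, whose image vanishes on I, witnesses
  singularity: the map acting as A on the rows in I and as the identity elsewhere is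
  surjective when A is invertible, but it kills u.\<close>
lemma closed_block_not_invertible:
  fixes A :: "real^'n^'n"
  assumes cl: "closed_block A I" and supp: "\<And>j. j \<notin> I \<Longrightarrow> u $ j = 0" and "u \<noteq> 0"
    and Au: "\<And>i. i \<in> I \<Longrightarrow> (A *v u) $ i = 0"
  shows "\<not> invertible A"
proof
  assume inv: "invertible A"
  define T where "T w = (\<chi> i. if i \<in> I then (A *v w) $ i else w $ i)" for w
  have lin: "linear T"
    by (rule linearI) (auto simp: T_def vec_eq_iff matrix_vector_right_distrib matrix_vector_mult_scaleR)
  have "surj T"
  proof (rule surjI)
    fix e
    let ?v = "matrix_inv A *v e"
    let ?w = "\<chi> i. if i \<in> I then ?v $ i else e $ i"
    have "(A *v ?w) $ i = e $ i" if "i \<in> I" for i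
    proof -
      have "(A *v ?w) $ i = (A *v ?v) $ i" by (rule closed_block_apply[OF cl that]) simp
      also have "\<dots> = e $ i" by (simp add: invertible_matrix_inv_apply[OF inv])
      finally show ?thesis .
    qed
    then show "T ?w = e" by (simp add: T_def vec_eq_iff)
  qed
  then have "inj T" by (rule linear_surj_imp_inj[OF lin])
  moreover have "T u = T 0" using supp Au by (simp add: T_def vec_eq_iff)
  ultimately show False using \<open>u \<noteq> 0\<close> by (meson injD)
qed

lemma bounded_incseq_vec_limit:
  fixes w :: "nat \<Rightarrow> real^'n"
  assumes inc: "\<And>k. w k \<le> w (Suc k)" and bound: "\<And>k. w k \<le> z"
  obtains W where "w \<longlonglongrightarrow> W" "\<And>k. w k \<le> W" "W \<le> z"
proof -
  have "\<exists>L. (\<lambda>k. w k $ i) \<longlonglongrightarrow> L" for i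
  proof -
    have "incseq (\<lambda>k. w k $ i)" by (rule incseq_SucI) (use inc in \<open>simp add: less_eq_vec_def\<close>)
    moreover have "\<forall>k. w k $ i \<le> z $ i" using bound by (simp add: less_eq_vec_def)
    ultimately show ?thesis by (meson incseq_convergent)
  qed
  then obtain L where L: "\<And>i. (\<lambda>k. w k $ i) \<longlonglongrightarrow> L i" by metis
  define W where "W = (\<chi> i. L i)"
  have comp: "(\<lambda>k. w k $ i) \<longlonglongrightarrow> W $ i" for i by (simp add: W_def L)
  show thesis
  proof
    show "w \<longlonglongrightarrow> W" by (rule vec_tendstoI) (rule comp)
    show "w k \<le> W" for k
      unfolding less_eq_vec_def
    proof
      fix i
      have "incseq (\<lambda>k. w k $ i)" by (rule incseq_SucI) (use inc in \<open>simp add: less_eq_vec_def\<close>)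
      then show "w k $ i \<le> W $ i" using comp by (rule incseq_le)
    qed
    show "W \<le> z"
      unfolding less_eq_vec_def
      by (intro allI LIMSEQ_le_const2[OF comp]) (use bound in \<open>simp add: less_eq_vec_def\<close>)
  qed
qed

text \<open>Supersolution lemma: if M is inverse monotone and z \<ge> 0 satisfies a + b(z,z) \<le> M z,
  then the fixed-point iteration w_{k+1} = M^{-1} (a + b(w_k, w_k)) from w_0 = 0 increases,
  stays below z, and converges to a solution below z.\<close>
lemma solution_below_supersolution:
  fixes M :: "real^'n^'n" and a z :: "real^'n" and b :: "real^'n \<Rightarrow> real^'n \<Rightarrow> real^'n"
  assumes M: "inv_monotone M" and a: "0 \<le> a"
    and b: "bilinear b" "\<And>u v. 0 \<le> u \<Longrightarrow> 0 \<le> v \<Longrightarrow> 0 \<le> b u v"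
    and z: "0 \<le> z" "a + b z z \<le> M *v z"
  obtains w where "is_sol M a b w" "w \<le> z"
proof -
  define w :: "nat \<Rightarrow> real^'n" where "w = rec_nat 0 (\<lambda>_ v. matrix_inv M *v (a + b v v))"
  have w_0: "w 0 = 0" by (simp add: w_def)
  have Mw: "M *v w (Suc k) = a + b (w k) (w k)" for k
    by (simp add: w_def invertible_matrix_inv_apply[OF inv_monotone_invertible[OF M]])
  have rhs_mono: "a + b u u \<le> a + b u' u'" if "0 \<le> u" "u \<le> u'" for u u'
    using bilinear_nonneg_mono[OF b that that] by (simp add: less_eq_vec_def)
  have bounded: "0 \<le> w k \<and> w k \<le> z" for k
  proof (induction k)
    case 0 show ?case using z(1) by (simp add: w_0)
  next
    case (Suc k)
    have lower: "M *v 0 \<le> M *v w (Suc k)"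
      unfolding Mw using a b(2) Suc by (simp add: add_nonneg_nonneg)
    have "a + b (w k) (w k) \<le> a + b z z" using rhs_mono Suc by blast
    then have upper: "M *v w (Suc k) \<le> M *v z" unfolding Mw using z(2) by (rule order_trans)
    show ?case using inv_monotone_le[OF M lower] inv_monotone_le[OF M upper] by simp
  qed
  have increasing: "w k \<le> w (Suc k)" for k
  proof (induction k)
    case 0 show ?case using bounded by (simp add: w_0)
  next
    case (Suc k)
    have "M *v w (Suc k) \<le> M *v w (Suc (Suc k))"
      unfolding Mw using bounded[of k] Suc by (intro rhs_mono) auto
    then show ?case by (rule inv_monotone_le[OF M])
  qed
  obtain W where lim: "w \<longlonglongrightarrow> W" and below: "\<And>k. w k \<le> W" "W \<le> z"
    using bounded by (metis bounded_incseq_vec_limit increasing)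
  have "(\<lambda>k. M *v w (Suc k)) \<longlonglongrightarrow> M *v W"
    using bounded_linear.tendsto[OF matrix_vector_mul_bounded_linear LIMSEQ_Suc[OF lim]] .
  moreover have "(\<lambda>k. M *v w (Suc k)) \<longlonglongrightarrow> a + b W W"
  proof -
    have "bounded_bilinear b" using b(1) by (simp add: bilinear_conv_bounded_bilinear)
    from bounded_bilinear.tendsto[OF this lim lim]
    show ?thesis unfolding Mw by (rule tendsto_add[OF tendsto_const])
  qed
  ultimately have "M *v W = a + b W W" by (rule LIMSEQ_unique)
  moreover have "0 \<le> W" using below(1)[of 0] by (simp add: w_0)
  ultimately have "is_sol M a b W" by (simp add: is_sol_def)
  then show thesis using that below(2) by blast
qed

definition zero_on :: "'n set \<Rightarrow> real^'n \<Rightarrow> real^'n" where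
  "zero_on I v = (\<chi> j. if j \<in> I then 0 else v $ j)"

locale quadratic_min_solution =
  fixes M :: "real^'n^'n" and a xs :: "real^'n" and b :: "real^'n \<Rightarrow> real^'n \<Rightarrow> real^'n"
  assumes M_Z: "Z_matrix M" and M_invertible: "invertible M"
    and a_nonneg: "0 \<le> a"
    and b_bilinear: "bilinear b" and b_nonneg: "\<And>u v. 0 \<le> u \<Longrightarrow> 0 \<le> v \<Longrightarrow> 0 \<le> b u v"
    and xs_min: "is_min_sol M a b xs" and xs_pos: "\<And>i. 0 < xs $ i"
begin

lemma xs_nonneg: "0 \<le> xs" and xs_eq: "M *v xs = a + b xs xs"
  using xs_min by (auto simp: is_min_sol_def is_sol_def)

text \<open>Step (1): M is inverse monotone, by the criterion with v = xs.\<close>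
lemma M_inv_monotone: "inv_monotone M"
proof (rule Z_matrix_inv_monotone[OF M_Z xs_pos])
  show "0 \<le> M *v xs" using a_nonneg b_nonneg[OF xs_nonneg xs_nonneg] by (simp add: xs_eq)
  fix I assume "I \<noteq> {}" and cl: "closed_block M I"
  show "\<exists>i\<in>I. (M *v xs) $ i \<noteq> 0"
  proof (rule ccontr)
    assume "\<not> ?thesis"
    then have vanish: "(M *v xs) $ i = 0" if "i \<in> I" for i using that by blast
    let ?u = "zero_on (- I) xs"
    obtain i0 where "i0 \<in> I" using \<open>I \<noteq> {}\<close> by blast
    then have "?u $ i0 \<noteq> 0" using xs_pos[of i0] by (simp add: zero_on_def)
    then have "?u \<noteq> 0" by auto
    moreover have "(M *v ?u) $ i = 0" if "i \<in> I" for i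
      using closed_block_apply[OF cl that, of ?u xs] vanish[OF that] by (simp add: zero_on_def)
    ultimately have "\<not> invertible M"
      by (intro closed_block_not_invertible[OF cl]) (auto simp: zero_on_def)
    then show False using M_invertible by blast
  qed
qed

lemma xs_below_supersolution:
  assumes "0 \<le> z" "a + b z z \<le> M *v z" shows "xs \<le> z"
proof -
  obtain w where "is_sol M a b w" "w \<le> z"
    using solution_below_supersolution[OF M_inv_monotone a_nonneg b_bilinear b_nonneg assms] .
  then show ?thesis using xs_min by (auto simp: is_min_sol_def intro: order_trans)
qed

text \<open>Zeroing xs on a nonempty closed block I of M cannot give a supersolution below xs,
  provided the right-hand side is already \<le> 0 on I; outside I, M (xs - z) \<le> 0 by
  the Z-sign pattern.\<close>
lemma zero_on_closed_block_not_supersolution: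
  assumes "I \<noteq> {}" and cl: "closed_block M I"
    and small: "\<And>i. i \<in> I \<Longrightarrow> (a + b (zero_on I xs) (zero_on I xs)) $ i \<le> 0"
  shows False
proof -
  let ?z = "zero_on I xs"
  have z: "0 \<le> ?z" "?z \<le> xs" using xs_nonneg by (auto simp: zero_on_def less_eq_vec_def)
  have "(a + b ?z ?z) $ i \<le> (M *v ?z) $ i" for i
  proof (cases "i \<in> I")
    case True
    have "(M *v ?z) $ i = (M *v 0) $ i"
      by (rule closed_block_apply[OF cl True]) (simp add: zero_on_def)
    then show ?thesis using small[OF True] by simp
  next
    case False
    have "(M *v (xs - ?z)) $ i \<le> 0"
      using z False by (intro Z_matrix_offdiag_nonpos[OF M_Z]) (auto simp: zero_on_def less_eq_vec_def)
    moreover have "b ?z ?z $ i \<le> b xs xs $ i"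
      using bilinear_nonneg_mono[OF b_bilinear b_nonneg z z] by (simp add: less_eq_vec_def)
    ultimately show ?thesis using xs_eq by (simp add: matrix_vector_mult_diff_distrib vec_eq_iff)
  qed
  then have "xs \<le> ?z" using z(1) by (intro xs_below_supersolution) (simp_all add: less_eq_vec_def)
  obtain i where "i \<in> I" using \<open>I \<noteq> {}\<close> by blast
  have "xs $ i \<le> ?z $ i" using \<open>xs \<le> ?z\<close> by (metis less_eq_vec_def)
  also have "?z $ i = 0" using \<open>i \<in> I\<close> by (simp add: zero_on_def)
  finally show False using xs_pos[of i] by simp
qed

end

locale quadratic_splitting = quadratic_min_solution M a xs b
  for M :: "real^'n^'n" and a xs :: "real^'n" and b :: "real^'n \<Rightarrow> real^'n \<Rightarrow> real^'n" +
  fixes N P :: "real^'n^'n" and b1 b2 :: "real^'n \<Rightarrow> real^'n \<Rightarrow> real^'n"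
    and J :: "real^'n \<Rightarrow> real^'n^'n" and g :: "real^'n \<Rightarrow> real^'n"
  assumes N_Z: "Z_matrix N" and P_nonneg: "0 \<le> P" and M_split: "M = N - P"
    and b1_bilinear: "bilinear b1" and b1_nonneg: "\<And>u v. 0 \<le> u \<Longrightarrow> 0 \<le> v \<Longrightarrow> 0 \<le> b1 u v"
    and b2_bilinear: "bilinear b2" and b2_nonneg: "\<And>u v. 0 \<le> u \<Longrightarrow> 0 \<le> v \<Longrightarrow> 0 \<le> b2 u v"
    and b_split: "\<And>u v. b u v = b1 u v + b2 u v"
    and J_eq: "\<And>z. J z = N - matrix (\<lambda>y. b1 y z)"
    and g_eq: "\<And>z. g z = a + P *v z + b2 z z"
begin

lemma J_apply: "J z *v v = N *v v - b1 v z"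
  by (simp add: J_eq matrix_vector_mult_diff_rdistrib bilinear_matrix_apply[OF b1_bilinear])

lemma J_shift: "J y *v v = J y' *v v - b1 v (y - y')"
  using b1_bilinear by (simp add: J_apply bilinear_rsub)

lemma J_entry: "J z $ i $ j = N $ i $ j - b1 (axis j 1) z $ i"
  by (simp add: J_eq matrix_entry_axis)

lemma b1_axis_nonneg: "0 \<le> z \<Longrightarrow> 0 \<le> b1 (axis j 1) z $ i"
  using b1_nonneg[of "axis j 1" z] by (simp add: less_eq_vec_def axis_def)

lemma J_Z: assumes "0 \<le> z" shows "Z_matrix (J z)"
  unfolding Z_matrix_def
proof (intro allI impI)
  fix i j :: 'n assume "i \<noteq> j"
  then have "N $ i $ j \<le> 0" using N_Z by (simp add: Z_matrix_def)
  then show "J z $ i $ j \<le> 0" using b1_axis_nonneg[OF assms, of j i] by (simp add: J_entry)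
qed

lemma F_eq: "Fmap M a b z = J z *v z - g z"
  by (simp add: Fmap_def J_apply g_eq M_split b_split matrix_vector_mult_diff_rdistrib algebra_simps)

lemma J_xs_xs: "J xs *v xs = g xs"
  using F_eq[of xs] xs_eq by (simp add: Fmap_def)

lemma g_nonneg: "0 \<le> z \<Longrightarrow> 0 \<le> g z"
  using a_nonneg matrix_vector_nonneg[OF P_nonneg] b2_nonneg by (simp add: g_eq add_nonneg_nonneg)

lemma g_mono: assumes "0 \<le> u" "u \<le> u'" shows "g u \<le> g u'"
  using matrix_vector_mono[OF P_nonneg assms(2)] bilinear_nonneg_mono[OF b2_bilinear b2_nonneg assms assms]
  by (simp add: g_eq add_mono)

lemma g_xs_vanishing:
  assumes "g xs $ i = 0" shows "a $ i = 0" "(P *v xs) $ i = 0" "b2 xs xs $ i = 0"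
  using assms a_nonneg matrix_vector_nonneg[OF P_nonneg xs_nonneg] b2_nonneg[OF xs_nonneg xs_nonneg]
  by (simp_all add: g_eq less_eq_vec_def add_nonneg_eq_0_iff)

lemma J_xs_block_imp_N_block:
  assumes cl: "closed_block (J xs) I" shows "closed_block N I"
  unfolding closed_block_def
proof (intro ballI allI impI)
  fix i j assume "i \<in> I" "j \<notin> I"
  then have "i \<noteq> j" by blast
  then have "N $ i $ j \<le> 0" "J xs $ i $ j = 0"
    using N_Z cl \<open>i \<in> I\<close> \<open>j \<notin> I\<close> by (simp_all add: Z_matrix_def closed_block_def)
  then show "N $ i $ j = 0" using b1_axis_nonneg[OF xs_nonneg, of j i] by (simp add: J_entry)
qed

lemma J_xs_vanishing_block_imp_M_block:
  assumes cl: "closed_block (J xs) I" and vanish: "\<And>i. i \<in> I \<Longrightarrow> g xs $ i = 0"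
  shows "closed_block M I"
proof -
  have "P $ i $ j = 0" if "i \<in> I" for i j
    using nonneg_matrix_vanishing_row[OF P_nonneg xs_pos] g_xs_vanishing(2)[OF vanish[OF that]] .
  then show ?thesis
    using J_xs_block_imp_N_block[OF cl] by (simp add: closed_block_def M_split)
qed

lemma J_xs_vanishing_block_small:
  assumes cl: "closed_block (J xs) I" and "i \<in> I" and vanish: "g xs $ i = 0"
  shows "(a + b (zero_on I xs) (zero_on I xs)) $ i \<le> 0"
proof -
  let ?z = "zero_on I xs"
  have z: "0 \<le> ?z" "?z \<le> xs" using xs_nonneg by (auto simp: zero_on_def less_eq_vec_def)
  have "(N *v ?z) $ i = (N *v 0) $ i" "(J xs *v ?z) $ i = (J xs *v 0) $ i"
    by (rule closed_block_apply[OF J_xs_block_imp_N_block[OF cl] \<open>i \<in> I\<close>]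
        closed_block_apply[OF cl \<open>i \<in> I\<close>], simp add: zero_on_def)+
  then have "b1 ?z xs $ i = 0" by (simp add: J_apply)
  moreover have "b1 ?z ?z $ i \<le> b1 ?z xs $ i"
    using bilinear_nonneg_mono[OF b1_bilinear b1_nonneg z(1) order_refl z] by (simp add: less_eq_vec_def)
  moreover have "b2 ?z ?z $ i \<le> b2 xs xs $ i"
    using bilinear_nonneg_mono[OF b2_bilinear b2_nonneg z z] by (simp add: less_eq_vec_def)
  ultimately show ?thesis using g_xs_vanishing[OF vanish] by (simp add: b_split)
qed

text \<open>Hence J xs is inverse monotone: such a block would contradict the minimality of xs.\<close>
lemma J_xs_inv_monotone: "inv_monotone (J xs)"
proof (rule Z_matrix_inv_monotone[OF J_Z[OF xs_nonneg] xs_pos])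
  show "0 \<le> J xs *v xs" by (simp add: J_xs_xs g_nonneg xs_nonneg)
  fix I assume "I \<noteq> {}" and cl: "closed_block (J xs) I"
  show "\<exists>i\<in>I. (J xs *v xs) $ i \<noteq> 0"
  proof (rule ccontr)
    assume "\<not> ?thesis"
    then have vanish: "g xs $ i = 0" if "i \<in> I" for i using that J_xs_xs by auto
    show False
      using zero_on_closed_block_not_supersolution[OF \<open>I \<noteq> {}\<close>
          J_xs_vanishing_block_imp_M_block[OF cl vanish] J_xs_vanishing_block_small[OF cl _ vanish]] .
  qed
qed

text \<open>Step (3): with v = J(xs)^{-1} 1 \<ge> 0 we have J y v = 1 + b1(v, xs - y) > 0 for
  0 \<le> y \<le> xs, so J y is inverse monotone and the step is well defined.\<close>
lemma J_inv_monotone: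
  assumes "0 \<le> y" "y \<le> xs" shows "inv_monotone (J y)"
proof -
  define v where "v = matrix_inv (J xs) *v 1"
  have Jv: "J xs *v v = 1"
    unfolding v_def by (rule invertible_matrix_inv_apply[OF inv_monotone_invertible[OF J_xs_inv_monotone]])
  moreover have "0 \<le> (1 :: real^'n)" by (simp add: less_eq_vec_def)
  ultimately have v: "0 \<le> v" using J_xs_inv_monotone by (simp add: inv_monotone_def)
  have "0 \<le> b1 v (xs - y)" using b1_nonneg v assms(2) by (simp add: less_eq_vec_def)
  moreover have "J y *v v = 1 + b1 v (xs - y)"
    using J_shift[of y v xs] b1_bilinear Jv by (simp add: bilinear_rsub bilinear_rneg)
  ultimately have "0 < (J y *v v) $ i" for i
    by (simp add: less_eq_vec_def add_pos_nonneg)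
  then show ?thesis using J_Z[OF assms(1)] v by (intro Z_matrix_semipositive_inv_monotone)
qed

lemma J_solve:
  assumes "0 \<le> y" "y \<le> xs" shows "J y *v (matrix_inv (J y) *v h) = h"
  using invertible_matrix_inv_apply[OF inv_monotone_invertible[OF J_inv_monotone[OF assms]]] .

lemma g_le_J_xs:
  assumes "0 \<le> y" "y \<le> xs" shows "g y \<le> J y *v xs"
proof -
  have "J y *v xs = g xs + b1 xs (xs - y)"
    using J_shift[of y xs xs] b1_bilinear J_xs_xs by (simp add: bilinear_rsub bilinear_rneg)
  moreover have "0 \<le> b1 xs (xs - y)" using b1_nonneg xs_nonneg assms(2) by (simp add: less_eq_vec_def)
  ultimately show ?thesis using g_mono[OF assms] by (simp add: add_increasing2)
qed

lemma iteration_step: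
  assumes y: "0 \<le> y" "y \<le> xs" and F_y: "Fmap M a b y \<le> 0"
    and step: "J y *v y' = g y"
  shows "y \<le> y'" "y' \<le> xs" "Fmap M a b y' \<le> 0"
proof -
  have "J y *v y \<le> J y *v y'" using F_y by (simp add: F_eq step)
  then show y_le: "y \<le> y'" by (rule inv_monotone_le[OF J_inv_monotone[OF y]])
  have "J y *v y' \<le> J y *v xs" using g_le_J_xs[OF y] by (simp add: step)
  then show "y' \<le> xs" by (rule inv_monotone_le[OF J_inv_monotone[OF y]])
  have "0 \<le> y'" using y(1) y_le by (rule order_trans)
  then have "0 \<le> b1 y' (y' - y)" using b1_nonneg y_le by (simp add: less_eq_vec_def)
  then have "J y' *v y' \<le> g y" using J_shift[of y' y' y] step by simp
  also have "\<dots> \<le> g y'" by (rule g_mono[OF y(1) y_le])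
  finally show "Fmap M a b y' \<le> 0" by (simp add: F_eq)
qed

lemma gauss_seidel_step:
  assumes u: "0 \<le> u" "u \<le> u'" "u' \<le> xs" and step: "J u *v u' = g u"
    and y: "u \<le> y" "y \<le> u'" and h: "g u \<le> h" "h \<le> g u'"
  shows "invertible (J y)" "u' \<le> matrix_inv (J y) *v h" "matrix_inv (J y) *v h \<le> xs"
proof -
  have y_range: "0 \<le> y" "y \<le> xs" using u y by (auto intro: order_trans)
  have "0 \<le> u'" using u by (auto intro: order_trans)
  note J_mono = inv_monotone_le[OF J_inv_monotone[OF y_range]]
  show "invertible (J y)" by (rule inv_monotone_invertible[OF J_inv_monotone[OF y_range]])
  have h_eq: "J y *v (matrix_inv (J y) *v h) = h" by (rule J_solve[OF y_range])
  have "0 \<le> b1 u' (y - u)" using b1_nonneg \<open>0 \<le> u'\<close> y(1) by (simp add: less_eq_vec_def)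
  then have "J y *v u' \<le> g u" using J_shift[of y u' u] step by simp
  also have "\<dots> \<le> h" by (rule h(1))
  finally have "J y *v u' \<le> J y *v (matrix_inv (J y) *v h)" unfolding h_eq .
  then show "u' \<le> matrix_inv (J y) *v h" by (rule J_mono)
  have "0 \<le> b1 xs (u' - y)" using b1_nonneg xs_nonneg y(2) by (simp add: less_eq_vec_def)
  have "h \<le> g u'" by (rule h(2))
  also have "\<dots> \<le> J u' *v xs" by (rule g_le_J_xs[OF \<open>0 \<le> u'\<close> u(3)])
  also have "\<dots> \<le> J y *v xs" using J_shift[of u' xs y] \<open>0 \<le> b1 xs (u' - y)\<close> by simp
  finally have "J y *v (matrix_inv (J y) *v h) \<le> J y *v xs" unfolding h_eq .
  then show "matrix_inv (J y) *v h \<le> xs" by (rule J_mono)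
qed

end

theorem mainTheorem11:
  fixes M N P :: "real^'n^'n" and a :: "real^'n"
    and b b1 b2 :: "real^'n \<Rightarrow> real^'n \<Rightarrow> real^'n"
    and xs :: "real^'n" and x :: "nat \<Rightarrow> real^'n"
    and k :: nat and yk gk :: "real^'n"
    and J :: "real^'n \<Rightarrow> real^'n^'n" and g :: "real^'n \<Rightarrow> real^'n"
  assumes M: "M_matrix M" "invertible M"
    and a: "0 \<le> a"
    and b: "bilinear b" "\<And>u v. 0 \<le> u \<Longrightarrow> 0 \<le> v \<Longrightarrow> 0 \<le> b u v"
    and H: "hypH M a b xs"
    and b1: "bilinear b1" "\<And>u v. 0 \<le> u \<Longrightarrow> 0 \<le> v \<Longrightarrow> 0 \<le> b1 u v"
    and b2: "bilinear b2" "\<And>u v. 0 \<le> u \<Longrightarrow> 0 \<le> v \<Longrightarrow> 0 \<le> b2 u v"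
    and bsplit: "\<And>u v. b u v = b1 u v + b2 u v"
    and N: "M_matrix N"
    and P: "0 \<le> P"
    and Msplit: "M = N - P"
    and J_def: "\<And>z. J z = N - matrix (\<lambda>y. b1 y z)"
    and g_def: "\<And>z. g z = a + P *v z + b2 z z"
    and x0: "0 \<le> x 0" "x 0 \<le> xs" "Fmap M a b (x 0) \<le> 0"
    and iter: "\<And>j. x (Suc j) = matrix_inv (J (x j)) *v g (x j)"
    and yk: "x k \<le> yk" "yk \<le> x (Suc k)"
    and gk: "g (x k) \<le> gk" "gk \<le> g (x (Suc k))"
  shows "invertible (J yk) \<and>
         x (Suc k) \<le> matrix_inv (J yk) *v gk \<and> matrix_inv (J yk) *v gk \<le> xs"
proof -
  have xs: "is_min_sol M a b xs" "\<And>i. 0 < xs $ i" using H by (auto simp: hypH_def)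
  interpret quadratic_splitting M a xs b N P b1 b2 J g
    using M_matrix_imp_Z_matrix[OF M(1)] M_matrix_imp_Z_matrix[OF N] M(2) a b b1 b2 bsplit P Msplit
      J_def g_def xs
    by unfold_locales auto
  have step: "J (x j) *v x (Suc j) = g (x j)" if "0 \<le> x j" "x j \<le> xs" for j
    unfolding iter by (rule J_solve[OF that])
  have invariant: "0 \<le> x j \<and> x j \<le> xs \<and> Fmap M a b (x j) \<le> 0" for j
  proof (induction j)
    case 0 show ?case using x0 by simp
  next
    case (Suc j)
    then have "0 \<le> x j" "x j \<le> xs" "Fmap M a b (x j) \<le> 0" by auto
    with iteration_step[OF this step[OF this(1,2)]] show ?case by (auto intro: order_trans)
  qed
  then have xk: "0 \<le> x k" "x k \<le> xs" "Fmap M a b (x k) \<le> 0" by auto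
  have "x k \<le> x (Suc k)" "x (Suc k) \<le> xs"
    using iteration_step[OF xk step[OF xk(1,2)]] by auto
  with gauss_seidel_step[OF xk(1) _ _ step[OF xk(1,2)] yk gk] show ?thesis by blast
qed

end
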